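(* Let $\mathbb P\in\mathbb\Psi^m_H(M)$ with $\Re(m)<-d_H$, and write $\mathbb k=(\mathcal L_Z-m)\mathbb P$. For every integer $n\ge1$ and $h\ge0$, \[\mathrm{tr}_h(\mathbb P)=\sum_{j=0}^{n-1}\frac{h^j}{j!\,(j-m-d_H)}\mathrm{tr}_0^{(j)}(\mathbb k)+\frac{h^n}{(n-1)!}\int_0^1\mathrm{tr}^{(n)}_{hu}(\mathbb k)\,u^{n-m-d_H-1}\Big(\int_u^1t^{m+d_H-n}(1-t)^{n-1}dt\Big)du.\] In particular, if $P\in\Psi^m_H(M)$ and $\mathbb P_1=P$, \[\mathrm{tr}(P)=\sum_{j=0}^{n-1}\frac{1}{j!\,(j-m-d_H)}\mathrm{tr}_0^{(j)}(\mathbb k)+\frac{1}{(n-1)!}\int_0^1\mathrm{tr}^{(n)}_u(\mathbb k)\,u^{n-m-d_H-1}\,\mathrm B(1-u;n,m+d_H-n+1)\,du,\] where $\mathrm B(x;\alpha,\beta)=\int_0^xt^{\alpha-1}(1-t)^{\beta-1}dt$.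
   Context: $(M,H)$ Carnot manifold, homogeneous dimension $d_H$; $\mathbb T_HM$ its $H$-tangent groupoid over $M\times\mathbb R$; $\mathcal L_Z$ the generator of pushforward by the zoom action $\alpha_\lambda$ ($(x,y,h)\mapsto(x,y,\lambda^{-1}h)$, $((x,z),0)\mapsto((x,\delta_\lambda z),0)$). $\mathbb\Psi^m_H(M)$: $r$-fibred distributions $\mathbb P$ with $(\mathcal L_Z-m)\mathbb P\in C^\infty_p(\mathbb T_HM,\Omega_r)$ (smooth $r$-fibre densities, $r,s$-proper support); $\Psi^m_H(M)=\{\mathbb P_1\}$, $\mathbb P_1$ the restriction to $h=1$. Local trace $\mathrm{tr}_h$: restriction of a smooth $r$-fibre density to the unit space point $(x,x,h)$ (resp. $((x,0),0)$ at $h=0$), a density on $M$; $\mathrm{tr}^{(j)}_h(\mathbb f)=\frac{d^j}{dh^j}\mathrm{tr}_h(\mathbb f)$. For $\Re(m)<-d_H$, $\mathrm{tr}_h(\mathbb P)=\int_0^1\mathrm{tr}_{\lambda h}((\mathcal L_Z-m)\mathbb P)\lambda^{-m-d_H-1}d\lambda$, and $\mathrm{tr}(P):=\mathrm{tr}_1(\mathbb P)$. *)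

theory Defs
  imports "HOL-Analysis.Analysis"
begin

text \<open>Abstraction: the local trace h \<mapsto> tr_h(k) of the smooth r-fibre density k = (L_Z - m)P,
  at a fixed point x of M (in a local trivialisation of the density bundle), is a smooth
  function g : real \<Rightarrow> complex.  d is the homogeneous dimension d_H.\<close>

definition hderiv :: "nat \<Rightarrow> (real \<Rightarrow> 'a::real_normed_vector) \<Rightarrow> real \<Rightarrow> 'a" where
  "hderiv j f = ((\<lambda>f x. vector_derivative f (at x)) ^^ j) f"

definition trP :: "(real \<Rightarrow> complex) \<Rightarrow> complex \<Rightarrow> nat \<Rightarrow> real \<Rightarrow> complex" where
  "trP g m d h = integral {0..1} (\<lambda>l. g (l * h) * (complex_of_real l) powr (- m - of_nat d - 1))"

definition betainc :: "real \<Rightarrow> complex \<Rightarrow> complex \<Rightarrow> complex" where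
  "betainc x a b = integral {0..x}
     (\<lambda>t. (complex_of_real t) powr (a - 1) * (complex_of_real (1 - t)) powr (b - 1))"

end

theory Submission
  imports Defs
begin

(* Put a = -m - d, so Re a > 0 and tr_h(P) = \<integral>_0^1 g(l h) l^(a-1) dl.  Integrating by parts
   n times against the kernels K_0(u) = (1 - u^a)/a and K_(k+1)(u) = \<integral>_u^1 K_k, which all
   vanish at u = 1, produces the Taylor terms h^j g^(j)(0) K_j(0) and the remainder
   h^n \<integral>_0^1 g^(n)(h u) K_(n-1)(u) du; the moments of the kernels give K_k(0) = 1/(k! (k + a)).
   For u > 0, K_k(u) = u^(k+a)/k! \<integral>_u^1 t^(-a-k-1) (1-t)^k dt, because both sides vanish
   at u = 1 and have derivative -K_(k-1); the substitution t \<mapsto> 1 - t turns this last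
   integral into an incomplete beta function. *)

lemma has_vector_derivative_of_real_powr:
  assumes "0 < t"
  shows "((\<lambda>x. of_real x powr s :: complex) has_vector_derivative s * of_real t powr (s - 1))
           (at t within S)"
proof -
  have "((\<lambda>z. z powr s) has_field_derivative s * of_real t powr (s - 1)) (at (of_real t))"
    by (rule has_field_derivative_powr) (use assms in \<open>auto simp: complex_nonpos_Reals_iff\<close>)
  from field_vector_diff_chain_at[OF has_vector_derivative_of_real[OF DERIV_ident] this]
  show ?thesis by (simp add: o_def has_vector_derivative_at_within)
qed

lemma continuous_on_of_real_powr:
  assumes "0 \<le> u" "u = 0 \<Longrightarrow> 0 < Re s"
  shows "continuous_on {u..v} (\<lambda>x. of_real x powr s :: complex)"
  by (rule continuous_on_powr_complex) (use assms in \<open>auto intro!: continuous_intros\<close>)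

lemma has_vector_derivative_of_real_power:
  "((\<lambda>x. of_real x ^ n :: complex) has_vector_derivative of_nat n * of_real t ^ (n - 1))
     (at t within S)"
  using has_vector_derivative_of_real[OF DERIV_pow[of n t]] by simp

lemma has_integral_of_real_power_01:
  "((\<lambda>t. of_real t ^ p :: complex) has_integral 1 / of_nat (Suc p)) {0..1}"
proof -
  have "((\<lambda>t. of_nat (Suc p) * of_real t ^ p / of_nat (Suc p) :: complex) has_integral
          of_real 1 ^ Suc p / of_nat (Suc p) - of_real 0 ^ Suc p / of_nat (Suc p)) {0..1}"
    by (intro fundamental_theorem_of_calculus has_vector_derivative_divide
          has_vector_derivative_of_real_power[of "Suc p", unfolded diff_Suc_1]) auto
  moreover have "(of_nat (Suc p) :: complex) \<noteq> 0"
    by (rule of_nat_neq_0)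
  ultimately show ?thesis
    by simp
qed

lemma has_integral_of_real_powr_01:
  assumes "0 < Re s"
  shows "((\<lambda>t. of_real t powr s :: complex) has_integral 1 / (s + 1)) {0..1}"
proof -
  have nz: "s + 1 \<noteq> 0"
    using assms by (auto simp: complex_eq_iff)
  have "((\<lambda>t. (s + 1) * of_real t powr (s + 1 - 1) / (s + 1)) has_integral
          of_real 1 powr (s + 1) / (s + 1) - of_real 0 powr (s + 1) / (s + 1)) {0..1}"
    by (intro fundamental_theorem_of_calculus_interior has_vector_derivative_divide
          has_vector_derivative_of_real_powr continuous_intros continuous_on_of_real_powr)
       (use assms nz in auto)
  with nz show ?thesis
    by simp
qed

lemma has_integral_by_parts_01:
  fixes f f' K L :: "real \<Rightarrow> complex"
  assumes "continuous_on {0..1} f" "continuous_on {0..1} K"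
    and "\<And>t. t \<in> {0<..<1} \<Longrightarrow> (f has_vector_derivative f' t) (at t)"
    and "\<And>t. t \<in> {0<..<1} \<Longrightarrow> (K has_vector_derivative - L t) (at t)"
    and "K 1 = 0"
    and "(\<lambda>t. f' t * K t) integrable_on {0..1}"
  shows "((\<lambda>t. f t * L t) has_integral f 0 * K 0 + integral {0..1} (\<lambda>t. f' t * K t)) {0..1}"
proof -
  have "((\<lambda>t. - L t * f t) has_integral - (f 0 * K 0 + integral {0..1} (\<lambda>t. f' t * K t))) {0..1}"
    by (rule integration_by_parts_interior[OF bounded_bilinear_mult, of 0 1 K f])
       (use assms in \<open>auto simp: mult.commute integrable_integral\<close>)
  from has_integral_neg[OF this] show ?thesis
    by (simp add: ac_simps)
qed

(* Equivalently, taylor_kernel a k u = \<integral>_u^1 (t - u)^k t^(a-1) dt / k!: the kernel obtained by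
   pairing the integral form of the Taylor remainder with the weight t^(a-1). *)
primrec taylor_kernel :: "complex \<Rightarrow> nat \<Rightarrow> real \<Rightarrow> complex" where
  "taylor_kernel a 0 u = (1 - of_real u powr a) / a"
| "taylor_kernel a (Suc k) u = integral {u..1} (taylor_kernel a k)"

declare taylor_kernel.simps(2) [simp del]

lemma taylor_kernel_Suc: "taylor_kernel a (Suc k) = (\<lambda>u. integral {u..1} (taylor_kernel a k))"
  by (auto simp: taylor_kernel.simps)

lemma continuous_on_taylor_kernel:
  assumes "0 < Re a"
  shows "continuous_on {0..1} (taylor_kernel a k)"
proof (induction k)
  case 0
  show ?case
    unfolding taylor_kernel.simps using assms
    by (intro continuous_intros continuous_on_of_real_powr) auto
next
  case (Suc k)
  then show ?case
    unfolding taylor_kernel_Suc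
    by (simp add: indefinite_integral_continuous_1' integrable_continuous_real)
qed

lemma taylor_kernel_0_has_vector_derivative:
  assumes "a \<noteq> 0" "0 < t"
  shows "(taylor_kernel a 0 has_vector_derivative - (of_real t powr (a - 1))) (at t)"
proof -
  have "((\<lambda>u. (1 - of_real u powr a) * (1 / a)) has_vector_derivative
          (0 - a * of_real t powr (a - 1)) * (1 / a)) (at t)"
    by (intro has_vector_derivative_mult_left has_vector_derivative_diff
          has_vector_derivative_const has_vector_derivative_of_real_powr assms)
  moreover have "taylor_kernel a 0 = (\<lambda>u. (1 - of_real u powr a) * (1 / a))"
    by auto
  ultimately show ?thesis
    using assms by simp
qed

lemma taylor_kernel_Suc_has_vector_derivative:
  assumes "0 < Re a" "t \<in> {0<..<1}"
  shows "(taylor_kernel a (Suc k) has_vector_derivative - taylor_kernel a k t) (at t)"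
  using integral_has_vector_derivative'[OF continuous_on_taylor_kernel, of a t] assms
  by (simp add: taylor_kernel_Suc at_within_Icc_at)

lemma taylor_kernel_at_1 [simp]: "taylor_kernel a k 1 = 0"
  by (cases k) (simp_all add: taylor_kernel.simps)

lemma has_integral_power_mult_taylor_kernel_0:
  assumes a: "0 < Re a"
  shows "((\<lambda>t. of_real t ^ p * taylor_kernel a 0 t) has_integral
           1 / (of_nat (Suc p) * (of_nat (Suc p) + a))) {0..1}"
proof -
  have "((\<lambda>t. (of_real t ^ p - of_real t powr (of_nat p + a)) * (1 / a)) has_integral
          (1 / of_nat (Suc p) - 1 / (of_nat p + a + 1)) * (1 / a)) {0..1}"
    using a by (intro has_integral_mult_left has_integral_diff has_integral_of_real_power_01
                  has_integral_of_real_powr_01) auto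
  moreover have "(\<lambda>t. (of_real t ^ p - of_real t powr (of_nat p + a)) * (1 / a)) =
      (\<lambda>t. of_real t ^ p * taylor_kernel a 0 t)"
  proof
    fix t :: real
    show "(of_real t ^ p - of_real t powr (of_nat p + a)) * (1 / a) =
        of_real t ^ p * taylor_kernel a 0 t"
      by (cases "t = 0") (simp_all add: powr_add powr_nat' field_simps)
  qed
  moreover have "a \<noteq> 0" "of_nat p + a + 1 \<noteq> 0" "(of_nat (Suc p) :: complex) \<noteq> 0"
    using a by (auto simp: complex_eq_iff)
  then have "(1 / of_nat (Suc p) - 1 / (of_nat p + a + 1)) * (1 / a) =
      1 / (of_nat (Suc p) * (of_nat (Suc p) + a))"
    by (simp add: field_simps)
  ultimately show ?thesis
    by (simp only:)
qed

(* Only p = 0 is needed below, but the induction on k shifts p. *)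
lemma has_integral_power_mult_taylor_kernel:
  assumes a: "0 < Re a"
  shows "((\<lambda>t. of_real t ^ p * taylor_kernel a k t) has_integral
           of_nat (fact p) / (of_nat (fact (p + k + 1)) * (of_nat (p + k + 1) + a))) {0..1}"
proof (induction k arbitrary: p)
  case 0
  have "1 / (of_nat (Suc p) * (of_nat (Suc p) + a)) =
      of_nat (fact p) / (of_nat (Suc p) * of_nat (fact p) * (of_nat (Suc p) + a))"
    by simp
  also have "\<dots> = of_nat (fact p) / (of_nat (fact (p + 0 + 1)) * (of_nat (p + 0 + 1) + a))"
    by (simp only: add_0_right Suc_eq_plus1[symmetric] fact_Suc of_nat_mult of_nat_id)
  finally show ?case
    using has_integral_power_mult_taylor_kernel_0[OF a, of p] by (simp only:)
next
  case (Suc k)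
  let ?f = "\<lambda>t. of_real t ^ Suc p / of_nat (Suc p) :: complex"
  have "(?f has_vector_derivative of_real t ^ p) (at t)" for t
    using has_vector_derivative_divide[OF has_vector_derivative_of_real_power[of "Suc p" t UNIV],
        of "of_nat (Suc p)"] of_nat_neq_0[of p, where ?'a = complex]
    by (simp del: of_nat_Suc)
  then have "((\<lambda>t. ?f t * taylor_kernel a k t) has_integral
          ?f 0 * taylor_kernel a (Suc k) 0 +
          integral {0..1} (\<lambda>t. of_real t ^ p * taylor_kernel a (Suc k) t)) {0..1}"
    by (intro has_integral_by_parts_01 continuous_on_taylor_kernel
          taylor_kernel_Suc_has_vector_derivative integrable_continuous_real continuous_intros a)
       (simp_all del: of_nat_Suc)
  moreover have "((\<lambda>t. ?f t * taylor_kernel a k t) has_integral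
          of_nat (fact p) / (of_nat (fact (p + Suc k + 1)) * (of_nat (p + Suc k + 1) + a))) {0..1}"
  proof -
    have "(\<lambda>t. ?f t * taylor_kernel a k t) =
        (\<lambda>t. of_real t ^ Suc p * taylor_kernel a k t / of_nat (Suc p))"
      by auto
    moreover have "of_nat (fact (Suc p)) / D / of_nat (Suc p) = (of_nat (fact p) / D :: complex)"
      for D
      by (simp only: fact_Suc of_nat_mult of_nat_id) (simp del: of_nat_Suc)
    moreover have "Suc p + k + 1 = p + Suc k + 1"
      by simp
    ultimately show ?thesis
      using has_integral_divide[OF Suc.IH[of "Suc p"], of "of_nat (Suc p)"] by (simp only:)
  qed
  ultimately have "integral {0..1} (\<lambda>t. of_real t ^ p * taylor_kernel a (Suc k) t) =
      of_nat (fact p) / (of_nat (fact (p + Suc k + 1)) * (of_nat (p + Suc k + 1) + a))"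
    by (simp add: has_integral_unique)
  moreover have "(\<lambda>t. of_real t ^ p * taylor_kernel a (Suc k) t) integrable_on {0..1}"
    by (intro integrable_continuous_real continuous_intros continuous_on_taylor_kernel a)
  ultimately show ?case
    by (simp add: has_integral_integral)
qed

lemma taylor_kernel_at_0:
  assumes "0 < Re a"
  shows "taylor_kernel a k 0 = 1 / (of_nat (fact k) * (of_nat k + a))"
proof (cases k)
  case (Suc j)
  then show ?thesis
    using has_integral_power_mult_taylor_kernel[OF assms, of 0 j]
    by (simp add: integral_unique taylor_kernel.simps)
qed simp

lemma hderiv_0 [simp]: "hderiv 0 f = f"
  by (simp add: hderiv_def)

lemma hderiv_Suc: "hderiv (Suc j) f = (\<lambda>x. vector_derivative (hderiv j f) (at x))"
  by (simp add: hderiv_def)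

lemma has_vector_derivative_hderiv_scaled:
  assumes "\<And>j x. hderiv j f differentiable (at x)"
  shows "((\<lambda>u. hderiv j f (h * u)) has_vector_derivative h *\<^sub>R hderiv (Suc j) f (h * u)) (at u)"
proof -
  have "((\<lambda>u. h * u) has_vector_derivative h) (at u)"
    using has_real_derivative_iff_has_vector_derivative DERIV_cmult_Id by blast
  moreover have "(hderiv j f has_vector_derivative hderiv (Suc j) f (h * u)) (at (h * u))"
    unfolding hderiv_Suc using assms vector_derivative_works by blast
  ultimately show ?thesis
    using vector_diff_chain_at by (simp add: o_def)
qed

lemma continuous_on_hderiv_scaled:
  assumes "\<And>j x. hderiv j f differentiable (at x)"
  shows "continuous_on S (\<lambda>u. hderiv j f (h * u))"
  using has_vector_derivative_hderiv_scaled[OF assms]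
  by (meson continuous_at_imp_continuous_on has_vector_derivative_continuous)

lemma taylor_remainder_recurrence:
  fixes g :: "real \<Rightarrow> complex"
  assumes smooth: "\<And>j x. hderiv j g differentiable (at x)" and a: "0 < Re a"
  shows "integral {0..1} (\<lambda>u. hderiv (Suc k) g (h * u) * taylor_kernel a k u) =
           hderiv (Suc k) g 0 / (of_nat (fact (Suc k)) * (of_nat (Suc k) + a))
         + of_real h * integral {0..1} (\<lambda>u. hderiv (Suc (Suc k)) g (h * u) * taylor_kernel a (Suc k) u)"
proof -
  have "((\<lambda>u. hderiv (Suc k) g (h * u) * taylor_kernel a k u) has_integral
           hderiv (Suc k) g (h * 0) * taylor_kernel a (Suc k) 0
         + integral {0..1} (\<lambda>u. of_real h * hderiv (Suc (Suc k)) g (h * u) * taylor_kernel a (Suc k) u))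
         {0..1}"
    using has_vector_derivative_hderiv_scaled[OF smooth]
    by (intro has_integral_by_parts_01 continuous_on_hderiv_scaled smooth continuous_on_taylor_kernel
          taylor_kernel_Suc_has_vector_derivative integrable_continuous_real continuous_intros a)
       (simp_all add: scaleR_conv_of_real)
  then show ?thesis
    by (simp add: integral_unique taylor_kernel_at_0[OF a] mult.assoc del: of_nat_Suc fact_Suc)
qed

lemma has_integral_weighted_taylor:
  fixes g :: "real \<Rightarrow> complex"
  assumes smooth: "\<And>j x. hderiv j g differentiable (at x)" and a: "0 < Re a"
  shows "((\<lambda>l. g (l * h) * of_real l powr (a - 1)) has_integral
             (\<Sum>j<Suc k. of_real (h ^ j) / (of_nat (fact j) * (of_nat j + a)) * hderiv j g 0)
           + of_real (h ^ Suc k) *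
             integral {0..1} (\<lambda>u. hderiv (Suc k) g (h * u) * taylor_kernel a k u)) {0..1}"
proof (induction k)
  case 0
  have "a \<noteq> 0"
    using a by auto
  moreover have "continuous_on {0..1} (\<lambda>u. g (h * u))"
    using continuous_on_hderiv_scaled[OF smooth, of _ 0] by simp
  ultimately have "((\<lambda>u. g (h * u) * of_real u powr (a - 1)) has_integral
           g (h * 0) * taylor_kernel a 0 0
         + integral {0..1} (\<lambda>u. of_real h * hderiv (Suc 0) g (h * u) * taylor_kernel a 0 u)) {0..1}"
    using has_vector_derivative_hderiv_scaled[OF smooth, of 0]
    by (intro has_integral_by_parts_01 continuous_on_taylor_kernel
          taylor_kernel_0_has_vector_derivative integrable_continuous_real continuous_intros
          continuous_on_hderiv_scaled smooth a)
       (simp_all add: scaleR_conv_of_real)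
  then show ?case
    by (simp add: mult.commute mult.left_commute)
next
  case (Suc k)
  then show ?case
    unfolding taylor_remainder_recurrence[OF smooth a, of k h]
    by (simp add: algebra_simps del: of_nat_Suc fact_Suc)
qed

definition beta_tail :: "complex \<Rightarrow> nat \<Rightarrow> real \<Rightarrow> complex" where
  "beta_tail a k u = integral {u..1} (\<lambda>t. of_real t powr (- a - of_nat (Suc k)) * of_real ((1 - t) ^ k))"

lemma continuous_on_beta_tail_integrand:
  assumes "0 < u"
  shows "continuous_on {u..v} (\<lambda>t. of_real t powr (- a - of_nat (Suc k)) * of_real ((1 - t) ^ k) :: complex)"
  using assms by (intro continuous_intros continuous_on_of_real_powr) auto

lemma has_integral_beta_tail:
  assumes "0 < u"
  shows "((\<lambda>t. of_real t powr (- a - of_nat (Suc k)) * of_real ((1 - t) ^ k)) has_integral beta_tail a k u)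
           {u..1}"
  unfolding beta_tail_def
  by (intro integrable_integral integrable_continuous_real continuous_on_beta_tail_integrand assms)

lemma beta_tail_recurrence:
  assumes u: "0 < u" "u \<le> 1"
  shows "(of_nat (Suc k) + a) * beta_tail a (Suc k) u =
           of_real u powr (- a - of_nat (Suc k)) * of_real ((1 - u) ^ Suc k) - of_nat (Suc k) * beta_tail a k u"
proof -
  define \<phi> where "\<phi> t = of_real t powr (- a - of_nat (Suc k)) * of_real ((1 - t) ^ Suc k)" for t
  have "((\<lambda>t. of_real ((1 - t) ^ Suc k) :: complex) has_vector_derivative
          of_real (of_nat (Suc k) * (1 - t) ^ k * (- 1))) (at t within S)" for t S
    by (intro has_vector_derivative_of_real) (rule derivative_eq_intros refl | simp)+
  then have "((\<lambda>t. of_real t powr (- a - of_nat (Suc k)) * of_real (of_nat (Suc k) * (1 - t) ^ k * (- 1))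
        + ((- a - of_nat (Suc k)) * of_real t powr (- a - of_nat (Suc k) - 1)) * of_real ((1 - t) ^ Suc k))
      has_integral (\<phi> 1 - \<phi> u)) {u..1}"
    unfolding \<phi>_def
    by (intro fundamental_theorem_of_calculus has_vector_derivative_mult
          has_vector_derivative_of_real_powr) (use u in auto)
  moreover have "- a - of_nat (Suc k) - 1 = - a - of_nat (Suc (Suc k))"
    by simp
  ultimately have "((\<lambda>t. - of_nat (Suc k) * (of_real t powr (- a - of_nat (Suc k)) * of_real ((1 - t) ^ k))
        - (of_nat (Suc k) + a) * (of_real t powr (- a - of_nat (Suc (Suc k))) * of_real ((1 - t) ^ Suc k)))
      has_integral - \<phi> u) {u..1}" (is "(?g has_integral _) _")
    by (simp add: \<phi>_def algebra_simps del: of_nat_Suc)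
  moreover have "(?g has_integral - of_nat (Suc k) * beta_tail a k u - (of_nat (Suc k) + a) * beta_tail a (Suc k) u)
      {u..1}"
    by (intro has_integral_diff has_integral_mult_right has_integral_beta_tail u)
  ultimately show ?thesis
    unfolding \<phi>_def by (auto dest: has_integral_unique simp: algebra_simps)
qed

lemma has_vector_derivative_scaled_beta_tail:
  assumes "0 < u" and t: "t \<in> {u..1}"
  shows "((\<lambda>t. of_real t powr (of_nat (Suc k) + a) * beta_tail a (Suc k) t / of_nat (fact (Suc k)))
           has_vector_derivative
             - (of_real t powr (of_nat k + a) * beta_tail a k t / of_nat (fact k))) (at t within {u..1})"
proof -
  have t0: "0 < t" "t \<le> 1"
    using assms by auto
  let ?A = "of_real t powr (of_nat k + a) :: complex"
  let ?C = "of_real t powr (- a - of_nat (Suc (Suc k))) :: complex"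
  have "beta_tail a j = (\<lambda>t. integral {t..1}
      (\<lambda>t. of_real t powr (- a - of_nat (Suc j)) * of_real ((1 - t) ^ j)))" for j
    by (auto simp: beta_tail_def)
  then have "(beta_tail a (Suc k) has_vector_derivative - (?C * of_real ((1 - t) ^ Suc k)))
      (at t within {u..1})"
    by (simp only:) (rule integral_has_vector_derivative'[OF continuous_on_beta_tail_integrand[OF \<open>0 < u\<close>] t])
  then have "((\<lambda>t. of_real t powr (of_nat (Suc k) + a) * beta_tail a (Suc k) t / of_nat (fact (Suc k)))
      has_vector_derivative
        (of_real t powr (of_nat (Suc k) + a) * - (?C * of_real ((1 - t) ^ Suc k))
         + ((of_nat (Suc k) + a) * of_real t powr (of_nat (Suc k) + a - 1)) * beta_tail a (Suc k) t)
        / of_nat (fact (Suc k))) (at t within {u..1})" (is "(_ has_vector_derivative ?N / _) _")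
    by (intro has_vector_derivative_divide has_vector_derivative_mult
          has_vector_derivative_of_real_powr t0)
  moreover have "?N / of_nat (fact (Suc k)) = - (?A * beta_tail a k t / of_nat (fact k))"
  proof -
    have eA: "of_real t powr (of_nat (Suc k) + a) = of_real t * ?A"
      using t0 by (simp add: powr_add add_ac)
    have eA1: "of_real t powr (of_nat (Suc k) + a - 1) = ?A"
      by (simp add: algebra_simps)
    have "- a - of_nat (Suc k) = (- a - of_nat (Suc (Suc k))) + (1 :: complex)"
      by simp
    then have "of_real t powr (- a - of_nat (Suc k)) = of_real t powr ((- a - of_nat (Suc (Suc k))) + 1)"
      by (simp only:)
    also have "\<dots> = of_real t * ?C"
      by (simp only: powr_add) (use t0 in \<open>simp add: mult.commute\<close>)
    finally have rec: "(of_nat (Suc k) + a) * beta_tail a (Suc k) t =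
        of_real t * ?C * of_real ((1 - t) ^ Suc k) - of_nat (Suc k) * beta_tail a k t"
      using beta_tail_recurrence[OF t0] by simp
    have "?N = - (of_real t * ?A * ?C * of_real ((1 - t) ^ Suc k))
          + ?A * ((of_nat (Suc k) + a) * beta_tail a (Suc k) t)"
      unfolding eA eA1 by (simp add: algebra_simps)
    also have "\<dots> = - of_nat (Suc k) * ?A * beta_tail a k t"
      unfolding rec by (simp add: algebra_simps)
    finally have "?N = - of_nat (Suc k) * ?A * beta_tail a k t" .
    moreover have "of_nat (fact (Suc k)) = of_nat (Suc k) * (of_nat (fact k) :: complex)"
      by (simp only: fact_Suc of_nat_mult of_nat_id)
    ultimately show ?thesis
      by (simp del: of_nat_Suc)
  qed
  ultimately show ?thesis
    by simp
qed

lemma beta_tail_at_1 [simp]: "beta_tail a k 1 = 0"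
  by (simp add: beta_tail_def)

lemma taylor_kernel_eq_scaled_beta_tail:
  assumes a: "0 < Re a" and u: "0 < u" "u \<le> 1"
  shows "taylor_kernel a k u = of_real u powr (of_nat k + a) * beta_tail a k u / of_nat (fact k)"
  using u
proof (induction k arbitrary: u)
  case 0
  have "a \<noteq> 0"
    using a by auto
  have "((\<lambda>t. - ((- a) * of_real t powr (- a - 1)) / a) has_integral
          - (of_real 1 powr (- a)) / a - - (of_real u powr (- a)) / a) {u..1}"
    using 0 by (intro fundamental_theorem_of_calculus has_vector_derivative_divide
                  has_vector_derivative_minus has_vector_derivative_of_real_powr) auto
  moreover have "(\<lambda>t. - ((- a) * of_real t powr (- a - 1)) / a) =
      (\<lambda>t. of_real t powr (- a - of_nat (Suc 0)) * of_real ((1 - t) ^ 0))"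
    using \<open>a \<noteq> 0\<close> by auto
  moreover have "- (of_real 1 powr (- a)) / a - - (of_real u powr (- a)) / a =
      (of_real u powr (- a) - 1) / a"
    by (simp add: diff_divide_distrib)
  ultimately have "beta_tail a 0 u = (of_real u powr (- a) - 1) / a"
    using has_integral_beta_tail[OF \<open>0 < u\<close>, of a 0] by (metis has_integral_unique)
  moreover have "of_real u powr a * of_real u powr (- a) = (1 :: complex)"
    using 0 by (simp add: powr_add[symmetric])
  ultimately show ?case
    by (simp add: field_simps)
next
  case (Suc k)
  have "((\<lambda>t. - (of_real t powr (of_nat k + a) * beta_tail a k t / of_nat (fact k))) has_integral
          of_real 1 powr (of_nat (Suc k) + a) * beta_tail a (Suc k) 1 / of_nat (fact (Suc k))
        - of_real u powr (of_nat (Suc k) + a) * beta_tail a (Suc k) u / of_nat (fact (Suc k))) {u..1}"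
    using Suc.prems
    by (intro fundamental_theorem_of_calculus has_vector_derivative_scaled_beta_tail) auto
  from has_integral_neg[OF this]
  have "((\<lambda>t. of_real t powr (of_nat k + a) * beta_tail a k t / of_nat (fact k)) has_integral
          of_real u powr (of_nat (Suc k) + a) * beta_tail a (Suc k) u / of_nat (fact (Suc k))) {u..1}"
    by simp
  moreover have "taylor_kernel a (Suc k) u =
      integral {u..1} (\<lambda>t. of_real t powr (of_nat k + a) * beta_tail a k t / of_nat (fact k))"
    unfolding taylor_kernel.simps using Suc by (intro integral_cong) auto
  ultimately show ?case
    by (metis integral_unique)
qed

lemma betainc_one_minus:
  "betainc (1 - u) (of_nat (Suc k)) b =
     integral {u..1} (\<lambda>t. of_real t powr (b - 1) * of_real ((1 - t) ^ k))"
proof -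
  let ?f = "\<lambda>t. of_real t powr (b - 1) * of_real ((1 - t) ^ k) :: complex"
  have "integral {u..1} ?f = integral {-1..-u} (\<lambda>x. ?f (-x))"
    by (rule Henstock_Kurzweil_Integration.integral_reflect_real[symmetric])
  also have "\<dots> = integral {0..1 - u} ((\<lambda>x. ?f (-x)) \<circ> (+) (-1))"
    using integral_shift_Icc_real[of 0 "1 - u" "\<lambda>x. ?f (-x)" "-1"] by simp
  also have "\<dots> = betainc (1 - u) (of_nat (Suc k)) b"
    unfolding betainc_def
  proof (rule integral_spike[of "{0}"])
    fix t :: real
    assume "t \<in> {0..1 - u} - {0}"
    then show "of_real t powr (of_nat (Suc k) - 1) * of_real (1 - t) powr (b - 1) =
        ((\<lambda>x. ?f (-x)) \<circ> (+) (-1)) t"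
      by (simp add: powr_nat')
  qed simp
  finally show ?thesis
    by simp
qed

lemma trP_expansion:
  fixes g :: "real \<Rightarrow> complex" and m :: complex
  assumes smooth: "\<And>j x. hderiv j g differentiable (at x)"
    and m: "Re m < - real d"
  shows "trP g m d h =
           (\<Sum>j<Suc k. complex_of_real (h ^ j) / (of_nat (fact j) * (of_nat j - m - of_nat d))
                     * hderiv j g 0)
         + complex_of_real (h ^ Suc k / fact k) *
           integral {0..1} (\<lambda>u. hderiv (Suc k) g (h * u)
              * (complex_of_real u) powr (of_nat (Suc k) - m - of_nat d - 1)
              * integral {u..1} (\<lambda>t. (complex_of_real t) powr (m + of_nat d - of_nat (Suc k))
                                      * complex_of_real ((1 - t) ^ k)))"
proof -
  define a where "a = - m - of_nat d"
  have a: "0 < Re a"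
    using m by (simp add: a_def)
  have "integral {0..1} (\<lambda>u. hderiv (Suc k) g (h * u)
              * (complex_of_real u) powr (of_nat (Suc k) - m - of_nat d - 1)
              * integral {u..1} (\<lambda>t. (complex_of_real t) powr (m + of_nat d - of_nat (Suc k))
                                      * complex_of_real ((1 - t) ^ k)))
      = integral {0..1} (\<lambda>u. of_nat (fact k) * (hderiv (Suc k) g (h * u) * taylor_kernel a k u))"
  proof (rule integral_spike[of "{0}"])
    fix u :: real
    assume "u \<in> {0..1} - {0}"
    then have u: "0 < u" "u \<le> 1"
      by auto
    show "of_nat (fact k) * (hderiv (Suc k) g (h * u) * taylor_kernel a k u) =
        hderiv (Suc k) g (h * u)
              * (complex_of_real u) powr (of_nat (Suc k) - m - of_nat d - 1)
              * integral {u..1} (\<lambda>t. (complex_of_real t) powr (m + of_nat d - of_nat (Suc k))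
                                      * complex_of_real ((1 - t) ^ k))"
      unfolding taylor_kernel_eq_scaled_beta_tail[OF a u] beta_tail_def
      by (simp add: a_def algebra_simps)
  qed simp
  then show ?thesis
    using has_integral_weighted_taylor[OF smooth a, of h k]
    by (simp add: trP_def integral_unique a_def of_real_divide algebra_simps)
qed

theorem mainTheorem9:
  fixes g :: "real \<Rightarrow> complex" and m :: complex and d :: nat and n :: nat and h :: real
  assumes smooth: "\<And>j x. hderiv j g differentiable (at x)"
    and m: "Re m < - real d"
    and n: "n \<ge> 1"
    and h: "h \<ge> 0"
  shows "trP g m d h =
           (\<Sum>j<n. complex_of_real (h ^ j) / (of_nat (fact j) * (of_nat j - m - of_nat d))
                     * hderiv j g 0)
         + complex_of_real (h ^ n / fact (n - 1)) *
           integral {0..1} (\<lambda>u. hderiv n g (h * u)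
              * (complex_of_real u) powr (of_nat n - m - of_nat d - 1)
              * integral {u..1} (\<lambda>t. (complex_of_real t) powr (m + of_nat d - of_nat n)
                                      * complex_of_real ((1 - t) ^ (n - 1))))
       \<and> trP g m d 1 =
           (\<Sum>j<n. 1 / (of_nat (fact j) * (of_nat j - m - of_nat d)) * hderiv j g 0)
         + complex_of_real (1 / fact (n - 1)) *
           integral {0..1} (\<lambda>u. hderiv n g u
              * (complex_of_real u) powr (of_nat n - m - of_nat d - 1)
              * betainc (1 - u) (of_nat n) (m + of_nat d - of_nat n + 1))"
proof -
  obtain k where n: "n = Suc k"
    using \<open>n \<ge> 1\<close> by (cases n) auto
  have "betainc (1 - u) (of_nat n) (m + of_nat d - of_nat n + 1) =
      integral {u..1} (\<lambda>t. (complex_of_real t) powr (m + of_nat d - of_nat n)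
                             * complex_of_real ((1 - t) ^ (n - 1)))" for u
    using betainc_one_minus[of u k "m + of_nat d - of_nat n + 1"]
    by (simp only: n add_diff_cancel diff_Suc_1)
  then show ?thesis
    using trP_expansion[OF smooth m, of h k] trP_expansion[OF smooth m, of 1 k]
    by (simp add: n)
qed

end
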